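(* Let $q\ge4$ be even, let $\alpha,\beta\in\mathbb{F}_{q^2}$ with $\alpha\neq0$, $\beta\notin\mathbb{F}_q$ and $\alpha^{q+1}/(\beta^q+\beta)^2$ of absolute trace $0$, and let $R=(0,\delta,1)$. Then (1) $\mathrm{pedal}(R)$ consists exactly of the points $Q_x=(x,\,\alpha x^2+\alpha^q x^{2q}+\delta^q,\,1)$ with $x\in\mathbb{F}_{q^2}$ satisfying $1+\alpha x^2+\alpha^q x^{2q}+(\beta+\beta^q)x^{q+1}=0$; (2) the points of $\mathrm{pedal}(R)$ are contained in the lines of the Baer pencil joining the vertex $U_\infty=(1,0,0)$ to the Baer subline $\{E_{s+\delta^q}=(0,s+\delta^q,1): s\in\mathbb{F}_q\}\cup\{(0,1,0)\}$.
   Context: Points of $\mathrm{PG}(2,q^2)$ have homogeneous coordinates $(x,y,z)$. $\delta\in\mathbb{F}_{q^2}\setminus\mathbb{F}_q$ satisfies $\delta^q=1+\delta$ and $\delta^2=v+\delta$ with $v\in\mathbb{F}_q$, $v\ne1$, of absolute trace $T(v)=v+v^2+\dots+v^{2^{h-1}}=1$ where $q=2^h$. $\mathcal U_{\alpha\beta}=\{(x,\alpha x^2+\beta x^{q+1}+r,1): x\in\mathbb{F}_{q^2}, r\in\mathbb{F}_q\}\cup\{(0,1,0)\}$, which under the hypotheses is a (non-classical) unital: a set of $q^3+1$ points meeting every line in $1$ or $q+1$ points. For a point $P$ not on the unital, $\mathrm{pedal}(P)$ is the set of points of contact of the $q+1$ tangent lines (lines meeting the unital in exactly one point) through $P$.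 A Baer pencil is the set of $q+1$ lines joining a vertex point to the $q+1$ points of a Baer subline (a set of points of a line projectively equivalent to $\mathrm{PG}(1,q)$). *)

theory Defs
  imports Main
begin

text \<open>The field F_{q^2} is modelled by a finite field type 'a with CARD('a) = q^2.
  Points of PG(2,q^2) are the classes of nonzero vectors under nonzero scalars.\<close>

definition proj_pt :: "'a::field \<Rightarrow> 'a \<Rightarrow> 'a \<Rightarrow> ('a \<times> 'a \<times> 'a) set" where
  "proj_pt x y z = {(c * x, c * y, c * z) | c. c \<noteq> 0}"

definition pg_points :: "('a::field \<times> 'a \<times> 'a) set set" where
  "pg_points = {proj_pt x y z | x y z. (x, y, z) \<noteq> (0, 0, 0)}"

definition pg_line :: "'a::field \<Rightarrow> 'a \<Rightarrow> 'a \<Rightarrow> ('a \<times> 'a \<times> 'a) set set" where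
  "pg_line a b c = {proj_pt x y z | x y z. (x, y, z) \<noteq> (0, 0, 0) \<and> a * x + b * y + c * z = 0}"

definition pg_lines :: "('a::field \<times> 'a \<times> 'a) set set set" where
  "pg_lines = {pg_line a b c | a b c. (a, b, c) \<noteq> (0, 0, 0)}"

definition Fq :: "nat \<Rightarrow> 'a::field set" where
  "Fq q = {x. x ^ q = x}"

text \<open>Absolute trace F_q -> F_2 with q = 2^h.\<close>
definition abs_trace :: "nat \<Rightarrow> 'a::field \<Rightarrow> 'a" where
  "abs_trace h w = (\<Sum>i<h. w ^ (2 ^ i))"

definition unital_ab :: "nat \<Rightarrow> 'a::field \<Rightarrow> 'a \<Rightarrow> ('a \<times> 'a \<times> 'a) set set" where
  "unital_ab q \<alpha> \<beta> =
     {proj_pt x (\<alpha> * x ^ 2 + \<beta> * x ^ (q + 1) + r) 1 | x r. r \<in> Fq q} \<union> {proj_pt 0 1 0}"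

definition tangent_line :: "('a::field \<times> 'a \<times> 'a) set set \<Rightarrow> ('a \<times> 'a \<times> 'a) set set \<Rightarrow> bool" where
  "tangent_line U L \<longleftrightarrow> L \<in> pg_lines \<and> card (L \<inter> U) = 1"

definition pedal :: "('a::field \<times> 'a \<times> 'a) set set \<Rightarrow> ('a \<times> 'a \<times> 'a) set \<Rightarrow> ('a \<times> 'a \<times> 'a) set set" where
  "pedal U P = {T. \<exists>L. tangent_line U L \<and> P \<in> L \<and> T \<in> L \<inter> U}"

end

theory Submission
  imports Defs
begin

text \<open>
  In characteristic 2 every line through R = (0, \<delta>, 1) other than X = 0 is Y = m X + \<delta>,
  and, since \<delta> + \<delta>^q = 1, its point (x, m x + \<delta>, 1) lies on the unital iff
  F_m(x) = Q(x) + m x + (m x)^q + 1 = 0, where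
  Q(z) = \<alpha> z^2 + \<alpha>^q z^(2q) + (\<beta> + \<beta>^q) z^(q+1) is an F_q-valued quadratic form.
  The trace hypothesis makes Q anisotropic. Around a root x_0 one has
  F_m(x_0 + z) = Q(z) + d z + (d z)^q with d = m + (\<beta> + \<beta>^q) x_0^q. If d = 0, anisotropy
  leaves x_0 as the only root; otherwise u = \<delta>/d scaled by the F_q-element 1/Q(u) is a
  second one. So the tangents through R are the lines with m = (\<beta> + \<beta>^q) x_0^q and
  1 + Q(x_0) = 0, touching the unital at a point with y-coordinate
  \<alpha> x_0^2 + \<alpha>^q x_0^(2q) + \<delta>^q. The first two summands lie in F_q, so the horizontal line
  through the contact point meets the Baer subline and passes through (1, 0, 0).
\<close>

lemma proj_pt_self: "(x, y, z) \<in> proj_pt x y z"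
  unfolding proj_pt_def by (rule CollectI, rule exI[of _ 1]) simp

lemma proj_pt_eqD:
  "proj_pt x y z = proj_pt x' y' z' \<Longrightarrow>
     \<exists>c. c \<noteq> 0 \<and> x = c * x' \<and> y = c * y' \<and> z = c * z'"
  using proj_pt_self[of x y z] unfolding proj_pt_def by auto

lemma proj_pt_affine_eq_iff: "proj_pt x y 1 = proj_pt x' y' 1 \<longleftrightarrow> x = x' \<and> y = y'"
  using proj_pt_eqD[of x y 1 x' y' 1] by auto

lemma proj_pt_affine_neq_infinity: "proj_pt x y 1 \<noteq> proj_pt 0 1 0"
  using proj_pt_eqD[of x y 1 0 1 0] by auto

lemma proj_pt_in_pg_line_iff:
  assumes "(x, y, z) \<noteq> (0, 0, 0)"
  shows "proj_pt x y z \<in> pg_line a b c \<longleftrightarrow> a * x + b * y + c * z = 0"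
proof
  assume "proj_pt x y z \<in> pg_line a b c"
  then obtain x' y' z' where eq: "proj_pt x y z = proj_pt x' y' z'"
    and on_line: "a * x' + b * y' + c * z' = 0"
    unfolding pg_line_def by auto
  from proj_pt_eqD[OF eq] obtain k where "x = k * x'" "y = k * y'" "z = k * z'" by blast
  then have "a * x + b * y + c * z = k * (a * x' + b * y' + c * z')" by (simp add: algebra_simps)
  with on_line show "a * x + b * y + c * z = 0" by simp
next
  assume "a * x + b * y + c * z = 0"
  with assms show "proj_pt x y z \<in> pg_line a b c" unfolding pg_line_def by blast
qed

lemma pg_line_in_pg_lines: "(a, b, c) \<noteq> (0, 0, 0) \<Longrightarrow> pg_line a b c \<in> pg_lines"
  unfolding pg_lines_def by blast

lemma pg_line_scale: "k \<noteq> 0 \<Longrightarrow> pg_line (k * a) (k * b) (k * c) = pg_line a b c"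
  unfolding pg_line_def by (simp add: mult.assoc flip: distrib_left)

lemma pg_lines_through_y_axis_point_cases:
  assumes "L \<in> pg_lines" and "proj_pt 0 d 1 \<in> L"
  shows "(\<exists>a. L = pg_line a 0 0) \<or> (\<exists>m. L = pg_line m 1 (- d))"
proof -
  obtain a b c where L: "L = pg_line a b c" and "(a, b, c) \<noteq> (0, 0, 0)"
    using assms(1) unfolding pg_lines_def by blast
  have c: "c = - (b * d)"
    using assms(2) unfolding L
    by (subst (asm) proj_pt_in_pg_line_iff) (auto simp: eq_neg_iff_add_eq_0 add.commute)
  show ?thesis
  proof (cases "b = 0")
    case True
    then show ?thesis using c L by auto
  next
    case False
    then have "L = pg_line (b * (a / b)) (b * 1) (b * - d)"
      using L c by simp
    also have "\<dots> = pg_line (a / b) 1 (- d)"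
      using False by (rule pg_line_scale)
    finally show ?thesis by blast
  qed
qed

lemma tangent_line_iff: "tangent_line U L \<longleftrightarrow> L \<in> pg_lines \<and> (\<exists>T. L \<inter> U = {T})"
  unfolding tangent_line_def by (simp add: card_1_singleton_iff)

lemma unital_ab_affine_iff:
  "proj_pt x y 1 \<in> unital_ab q \<alpha> \<beta> \<longleftrightarrow> y - \<alpha> * x ^ 2 - \<beta> * x ^ (q + 1) \<in> Fq q"
  unfolding unital_ab_def using proj_pt_affine_neq_infinity
  by (auto simp: proj_pt_affine_eq_iff algebra_simps)

lemma unital_ab_cases:
  "P \<in> unital_ab q \<alpha> \<beta> \<Longrightarrow> P = proj_pt 0 1 0 \<or> (\<exists>x y. P = proj_pt x y 1)"
  unfolding unital_ab_def by blast

lemma finite_field_power_card: "(x :: 'a :: {field, finite}) ^ card (UNIV :: 'a set) = x"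
proof -
  have card_pos: "0 < card (UNIV :: 'a set)"
    by (simp add: finite_UNIV_card_ge_0)
  show ?thesis
  proof (cases "x = 0")
    case True
    then show ?thesis using card_pos by simp
  next
    case False
    let ?S = "UNIV - {0 :: 'a}"
    have "bij_betw ((*) x) ?S ?S"
      by (rule bij_betw_byWitness[where f' = "\<lambda>y. y / x"]) (use False in auto)
    then have "prod ((*) x) ?S = prod id ?S"
      using prod.reindex_bij_betw[of "(*) x" ?S ?S id] by simp
    moreover have "prod ((*) x) ?S = x ^ card ?S * prod id ?S"
      by (simp add: prod.distrib)
    moreover have "card ?S = card (UNIV :: 'a set) - 1"
      by (simp add: card_Diff_singleton)
    ultimately have "x ^ (card (UNIV :: 'a set) - 1) = 1"
      by simp
    then have "x ^ Suc (card (UNIV :: 'a set) - 1) = x"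
      by simp
    then show ?thesis
      using card_pos by simp
  qed
qed

lemma finite_field_char_two: "even (card (UNIV :: 'a :: {field, finite} set)) \<Longrightarrow> (2 :: 'a) = 0"
  using finite_field_power_card[of "-1 :: 'a"]
  by (metis neg_one_even_power one_add_one add.right_inverse)

lemma char_two_minus:
  fixes x :: "'a :: ring_1"
  assumes "(2 :: 'a) = 0"
  shows "- x = x"
proof -
  have "x + x = 0" using assms by (simp flip: mult_2)
  then show ?thesis by (simp add: add_eq_0_iff)
qed

lemma char_two_diff:
  fixes x y :: "'a :: ring_1"
  assumes "(2 :: 'a) = 0"
  shows "x - y = x + y"
  using char_two_minus[OF assms, of y] by (simp only: diff_conv_add_uminus)

text \<open>This lets \<open>algebra\<close> prove identities that hold only in characteristic 2.\<close>

lemma char_two_eqI: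
  fixes x y :: "'a :: ring_1"
  assumes "(2 :: 'a) = 0" and "x - y = 2 * k"
  shows "x = y"
  using assms by simp

lemma char_two_power_two_power_add:
  fixes x y :: "'a :: comm_ring_1"
  assumes "(2 :: 'a) = 0"
  shows "(x + y) ^ (2 ^ k) = x ^ (2 ^ k) + y ^ (2 ^ k)"
proof (induction k)
  case (Suc k)
  have "(x + y) ^ (2 ^ Suc k) = ((x + y) ^ (2 ^ k)) ^ 2"
    by (simp add: power_mult[symmetric] mult.commute)
  also have "\<dots> = (x ^ (2 ^ k)) ^ 2 + (y ^ (2 ^ k)) ^ 2 + 2 * (x ^ (2 ^ k) * y ^ (2 ^ k))"
    using Suc by (simp add: power2_eq_square algebra_simps)
  also have "\<dots> = x ^ (2 ^ Suc k) + y ^ (2 ^ Suc k)"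
    using assms by (simp add: power_mult[symmetric] mult.commute)
  finally show ?case .
qed simp

lemma abs_trace_power2_add_self:
  fixes w :: "'a :: field"
  assumes char_two: "(2 :: 'a) = 0"
  shows "abs_trace h (w ^ 2 + w) = w ^ (2 ^ h) + w"
proof -
  have "(w ^ 2 + w) ^ (2 ^ i) = w ^ (2 ^ Suc i) - w ^ (2 ^ i)" for i
  proof -
    have "(w ^ 2 + w) ^ (2 ^ i) = (w ^ 2) ^ (2 ^ i) + w ^ (2 ^ i)"
      by (rule char_two_power_two_power_add[OF char_two])
    also have "\<dots> = w ^ (2 ^ Suc i) + w ^ (2 ^ i)"
      by (simp add: power_mult[symmetric])
    finally show ?thesis
      by (simp only: char_two_diff[OF char_two])
  qed
  then have "abs_trace h (w ^ 2 + w) = (\<Sum>i<h. w ^ (2 ^ Suc i) - w ^ (2 ^ i))"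
    unfolding abs_trace_def by (intro sum.cong) simp_all
  also have "\<dots> = w ^ (2 ^ h) - w ^ (2 ^ 0)"
    by (rule sum_lessThan_telescope)
  finally show ?thesis
    by (simp add: char_two_diff[OF char_two])
qed

lemma anisotropic_if_abs_trace_zero:
  fixes \<alpha> \<beta> z :: "'a :: field"
  assumes char_two: "(2 :: 'a) = 0"
    and power_q_add: "\<And>x y :: 'a. (x + y) ^ q = x ^ q + y ^ q"
    and power_q_power_q: "\<And>x :: 'a. (x ^ q) ^ q = x"
    and q: "q = 2 ^ h"
    and beta: "\<beta> ^ q \<noteq> \<beta>"
    and trace: "abs_trace h (\<alpha> ^ (q + 1) / (\<beta> ^ q + \<beta>) ^ 2) = 0"
    and zero: "\<alpha> * z ^ 2 + \<alpha> ^ q * z ^ (2 * q) + (\<beta> + \<beta> ^ q) * z ^ (q + 1) = 0"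
  shows "z = 0"
proof (rule ccontr)
  assume "z \<noteq> 0"
  define b where "b = \<beta> ^ q + \<beta>"
  define n where "n = z ^ (q + 1)"
  define w where "w = \<alpha> * z ^ 2 / (b * n)"
  \<comment> \<open>Then w + w^q = 1 and w w^q is the quotient in the trace hypothesis, which is therefore
    w^2 + w, of absolute trace w^q + w = 1.\<close>
  have b_nz: "b \<noteq> 0"
    using beta char_two_minus[OF char_two, of \<beta>] unfolding b_def
    by (auto simp flip: eq_neg_iff_add_eq_0)
  have n_nz: "n \<noteq> 0"
    using \<open>z \<noteq> 0\<close> unfolding n_def by simp
  have b_q: "b ^ q = b"
    unfolding b_def by (simp add: power_q_add power_q_power_q add.commute)
  have n_q: "n ^ q = n"
    unfolding n_def by (simp add: power_add power_mult_distrib power_q_power_q mult.commute)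
  have w_q: "w ^ q = \<alpha> ^ q * z ^ (2 * q) / (b * n)"
    unfolding w_def by (simp add: power_divide power_mult_distrib b_q n_q power_mult[symmetric] mult.commute)
  have "\<alpha> * z ^ 2 + \<alpha> ^ q * z ^ (2 * q) = - ((\<beta> + \<beta> ^ q) * z ^ (q + 1))"
    using zero by (simp only: eq_neg_iff_add_eq_0)
  then have "\<alpha> * z ^ 2 + \<alpha> ^ q * z ^ (2 * q) = b * n"
    unfolding b_def n_def char_two_minus[OF char_two] by (simp only: add.commute)
  moreover have "w + w ^ q = (\<alpha> * z ^ 2 + \<alpha> ^ q * z ^ (2 * q)) / (b * n)"
    by (subst w_q) (simp add: w_def add_divide_distrib)
  ultimately have "w + w ^ q = 1"
    using b_nz n_nz by simp
  then have "w ^ q = 1 - w"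
    by (simp add: eq_diff_eq add.commute)
  then have w_q': "w ^ q = w + 1"
    by (simp add: char_two_diff[OF char_two] add.commute)
  have "z ^ 2 * z ^ (2 * q) = n ^ 2"
    unfolding n_def by (simp add: power_add power_mult[symmetric] power_mult_distrib algebra_simps)
  then have "w * w ^ q = \<alpha> ^ (q + 1) / b ^ 2"
    using b_nz n_nz by (subst w_q) (simp add: w_def power2_eq_square field_simps)
  then have "\<alpha> ^ (q + 1) / (\<beta> ^ q + \<beta>) ^ 2 = w ^ 2 + w"
    unfolding w_q' b_def[symmetric] by (simp add: power2_eq_square algebra_simps)
  then have "abs_trace h (\<alpha> ^ (q + 1) / (\<beta> ^ q + \<beta>) ^ 2) = w ^ q + w"
    using abs_trace_power2_add_self[OF char_two] q by simp
  also have "\<dots> = 1"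
    using \<open>w + w ^ q = 1\<close> by (simp add: add.commute)
  finally show False
    using trace by simp
qed

locale char_two_unital =
  fixes q :: nat and \<alpha> \<beta> \<delta> :: "'a :: field"
  assumes char_two: "(2 :: 'a) = 0"
    and q_pos: "0 < q"
    and power_q_add: "\<And>x y :: 'a. (x + y) ^ q = x ^ q + y ^ q"
    and power_q_power_q: "\<And>x :: 'a. (x ^ q) ^ q = x"
    and delta_power_q: "\<delta> ^ q = 1 + \<delta>"
    and anisotropic:
      "\<And>z :: 'a. \<alpha> * z ^ 2 + \<alpha> ^ q * z ^ (2 * q) + (\<beta> + \<beta> ^ q) * z ^ (q + 1) = 0 \<Longrightarrow> z = 0"
begin

lemmas neg_eq_self = char_two_minus[OF char_two]
lemmas diff_eq_add = char_two_diff[OF char_two]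

lemma eq_iff_add_eq_0: "(x :: 'a) = y \<longleftrightarrow> x + y = 0"
  by (metis add_eq_0_iff neg_eq_self)

lemma power_q_simps:
  "(x :: 'a) ^ (2 * q) = (x ^ q) ^ 2" "(x :: 'a) ^ (q + 1) = x * x ^ q"
  "((x :: 'a) ^ 2) ^ q = (x ^ q) ^ 2" "(0 :: 'a) ^ q = 0" "(1 :: 'a) ^ q = 1"
  by (simp_all add: power_mult[symmetric] mult.commute power_add q_pos)

definition beta_trace :: 'a where
  "beta_trace = \<beta> + \<beta> ^ q"

definition quad_form :: "'a \<Rightarrow> 'a" where
  "quad_form z = \<alpha> * z ^ 2 + \<alpha> ^ q * z ^ (2 * q) + beta_trace * z ^ (q + 1)"

definition incidence_poly :: "'a \<Rightarrow> 'a \<Rightarrow> 'a" where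
  "incidence_poly m x = quad_form x + m * x + m ^ q * x ^ q + 1"

lemma beta_trace_power_q: "beta_trace ^ q = beta_trace"
  unfolding beta_trace_def by (simp add: power_q_add power_q_power_q add.commute)

lemma quad_form_power_q: "quad_form z ^ q = quad_form z"
  unfolding quad_form_def power_q_simps(1,2)
  by (simp only: power_q_add power_mult_distrib power_q_simps(3) power_q_power_q beta_trace_power_q)
    (simp add: ac_simps)

lemma quad_form_eq_0_iff: "quad_form z = 0 \<longleftrightarrow> z = 0"
  using anisotropic[of z] q_pos unfolding quad_form_def beta_trace_def by auto

lemma quad_form_scale: "t ^ q = t \<Longrightarrow> quad_form (t * u) = t ^ 2 * quad_form u"
  unfolding quad_form_def power_q_simps power_mult_distrib by (simp add: power2_eq_square algebra_simps)

lemma unital_ab_on_line_iff: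
  "proj_pt x (m * x + \<delta>) 1 \<in> unital_ab q \<alpha> \<beta> \<longleftrightarrow> incidence_poly m x = 0"
proof -
  define r where "r = m * x + \<delta> - \<alpha> * x ^ 2 - \<beta> * x ^ (q + 1)"
  have r: "r = m * x + \<delta> + \<alpha> * x ^ 2 + \<beta> * (x * x ^ q)"
    unfolding r_def diff_eq_add power_q_simps ..
  have r_q: "r ^ q = m ^ q * x ^ q + (1 + \<delta>) + \<alpha> ^ q * (x ^ q) ^ 2 + \<beta> ^ q * (x ^ q * x)"
    unfolding r power_q_add power_mult_distrib power_q_simps(3) power_q_power_q delta_power_q ..
  have "r + r ^ q = incidence_poly m x"
    unfolding r_q unfolding r incidence_poly_def quad_form_def beta_trace_def power_q_simps(1,2)
    by (rule char_two_eqI[OF char_two, where k = \<delta>]) algebra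
  moreover have "r \<in> Fq q \<longleftrightarrow> r + r ^ q = 0"
    unfolding Fq_def using eq_iff_add_eq_0[of "r ^ q" r] by (simp add: add.commute)
  ultimately show ?thesis
    unfolding unital_ab_affine_iff r_def by simp
qed

lemma incidence_poly_shift:
  "incidence_poly m (x + z) = incidence_poly m x + quad_form z
     + (m + beta_trace * x ^ q) * z + (m + beta_trace * x ^ q) ^ q * z ^ q"
proof -
  have d_q: "(m + beta_trace * x ^ q) ^ q = m ^ q + beta_trace * x"
    by (simp add: power_q_add power_mult_distrib beta_trace_power_q power_q_power_q)
  show ?thesis
    unfolding incidence_poly_def quad_form_def power_q_simps power_q_add[of x z] d_q
    by (rule char_two_eqI[OF char_two, where k = "\<alpha> * x * z + \<alpha> ^ q * x ^ q * z ^ q"]) algebra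
qed

lemma incidence_poly_at_contact: "incidence_poly (beta_trace * x ^ q) x = 1 + quad_form x"
proof -
  have m_q: "(beta_trace * x ^ q) ^ q = beta_trace * x"
    by (simp add: power_mult_distrib beta_trace_power_q power_q_power_q)
  show ?thesis
    unfolding incidence_poly_def m_q
    by (rule char_two_eqI[OF char_two, where k = "beta_trace * x * x ^ q"]) algebra
qed

lemma affine_pt_in_pg_line_iff: "proj_pt x y 1 \<in> pg_line m 1 \<delta> \<longleftrightarrow> y = m * x + \<delta>"
proof -
  have "proj_pt x y 1 \<in> pg_line m 1 \<delta> \<longleftrightarrow> y + (m * x + \<delta>) = 0"
    by (subst proj_pt_in_pg_line_iff) (simp_all add: ac_simps)
  also have "\<dots> \<longleftrightarrow> y = m * x + \<delta>"
    by (rule eq_iff_add_eq_0[symmetric])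
  finally show ?thesis .
qed

lemma pg_line_inter_unital_ab:
  "pg_line m 1 \<delta> \<inter> unital_ab q \<alpha> \<beta> =
     (\<lambda>x. proj_pt x (m * x + \<delta>) 1) ` {x. incidence_poly m x = 0}"
proof (intro equalityI subsetI)
  fix P assume P: "P \<in> pg_line m 1 \<delta> \<inter> unital_ab q \<alpha> \<beta>"
  have "proj_pt 0 1 0 \<notin> pg_line m 1 \<delta>"
    by (subst proj_pt_in_pg_line_iff) simp_all
  then obtain x y where xy: "P = proj_pt x y 1"
    using P unital_ab_cases by blast
  then have "y = m * x + \<delta>"
    using P affine_pt_in_pg_line_iff by blast
  then show "P \<in> (\<lambda>x. proj_pt x (m * x + \<delta>) 1) ` {x. incidence_poly m x = 0}"
    using P xy unital_ab_on_line_iff by blast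
next
  fix P assume "P \<in> (\<lambda>x. proj_pt x (m * x + \<delta>) 1) ` {x. incidence_poly m x = 0}"
  then obtain x where "P = proj_pt x (m * x + \<delta>) 1" and "incidence_poly m x = 0"
    by blast
  then show "P \<in> pg_line m 1 \<delta> \<inter> unital_ab q \<alpha> \<beta>"
    using affine_pt_in_pg_line_iff unital_ab_on_line_iff by blast
qed

lemma incidence_poly_other_root:
  assumes root: "incidence_poly m x\<^sub>0 = 0" and not_contact: "m \<noteq> beta_trace * x\<^sub>0 ^ q"
  shows "\<exists>z. z \<noteq> 0 \<and> incidence_poly m (x\<^sub>0 + z) = 0"
proof -
  define d where "d = m + beta_trace * x\<^sub>0 ^ q"
  define u where "u = \<delta> / d"
  define t where "t = 1 / quad_form u"
  have "d \<noteq> 0"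
    using not_contact eq_iff_add_eq_0 unfolding d_def by blast
  moreover have "\<delta> \<noteq> 0"
    using delta_power_q power_q_simps(4) by force
  ultimately have "u \<noteq> 0"
    unfolding u_def by simp
  then have Q_u: "quad_form u \<noteq> 0"
    by (simp add: quad_form_eq_0_iff)
  have "t \<noteq> 0"
    using Q_u unfolding t_def by simp
  have t_q: "t ^ q = t"
    unfolding t_def by (simp add: power_one_over quad_form_power_q)
  have du: "d * u = \<delta>" and du_q: "d ^ q * u ^ q = 1 + \<delta>"
    using \<open>d \<noteq> 0\<close> delta_power_q unfolding u_def by (simp_all flip: power_mult_distrib)
  have "incidence_poly m (x\<^sub>0 + t * u) = t ^ 2 * quad_form u + t * (d * u) + t * (d ^ q * u ^ q)"
    using incidence_poly_shift[of m x\<^sub>0 "t * u"] root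
    unfolding d_def[symmetric] quad_form_scale[OF t_q] power_mult_distrib t_q by (simp add: ac_simps)
  also have "\<dots> = t + t * \<delta> + t * (1 + \<delta>)"
    using Q_u unfolding du du_q t_def by (simp add: power2_eq_square)
  also have "\<dots> = 0"
    by (rule char_two_eqI[OF char_two, where k = "t + t * \<delta>"]) algebra
  finally show ?thesis
    using \<open>t \<noteq> 0\<close> \<open>u \<noteq> 0\<close> by (intro exI[of _ "t * u"]) simp
qed

lemma incidence_poly_roots_eq_singleton_iff:
  assumes root: "incidence_poly m x\<^sub>0 = 0"
  shows "{x. incidence_poly m x = 0} = {x\<^sub>0} \<longleftrightarrow> m = beta_trace * x\<^sub>0 ^ q"
proof
  assume "{x. incidence_poly m x = 0} = {x\<^sub>0}"
  then show "m = beta_trace * x\<^sub>0 ^ q"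
    using incidence_poly_other_root[OF root] by force
next
  assume "m = beta_trace * x\<^sub>0 ^ q"
  then have "m + beta_trace * x\<^sub>0 ^ q = 0"
    using eq_iff_add_eq_0 by blast
  then have "incidence_poly m x = quad_form (x - x\<^sub>0)" for x
    using incidence_poly_shift[of m x\<^sub>0 "x - x\<^sub>0"] root power_q_simps(4) q_pos by simp
  then show "{x. incidence_poly m x = 0} = {x\<^sub>0}"
    by (auto simp: quad_form_eq_0_iff)
qed

lemma pg_line_axis_not_tangent: "\<not> tangent_line (unital_ab q \<alpha> \<beta>) (pg_line a 0 0)"
proof
  assume "tangent_line (unital_ab q \<alpha> \<beta>) (pg_line a 0 0)"
  then obtain T where T: "pg_line a 0 0 \<inter> unital_ab q \<alpha> \<beta> = {T}"
    unfolding tangent_line_iff by blast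
  have "proj_pt 0 y 1 \<in> pg_line a 0 0" for y :: 'a
    by (subst proj_pt_in_pg_line_iff) simp_all
  moreover have "proj_pt 0 0 1 \<in> unital_ab q \<alpha> \<beta>" "proj_pt 0 1 1 \<in> unital_ab q \<alpha> \<beta>"
    unfolding unital_ab_affine_iff Fq_def by (simp_all add: power_q_simps(4,5))
  ultimately have "proj_pt 0 0 1 = proj_pt (0 :: 'a) 1 1"
    using T by blast
  then show False
    by (simp add: proj_pt_affine_eq_iff)
qed

lemma pg_line_tangent_inter_unital_ab:
  assumes "1 + quad_form x = 0"
  shows "pg_line (beta_trace * x ^ q) 1 \<delta> \<inter> unital_ab q \<alpha> \<beta>
           = {proj_pt x (beta_trace * x ^ q * x + \<delta>) 1}"
proof -
  have "incidence_poly (beta_trace * x ^ q) x = 0"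
    using assms by (simp add: incidence_poly_at_contact)
  then have "{y. incidence_poly (beta_trace * x ^ q) y = 0} = {x}"
    by (simp add: incidence_poly_roots_eq_singleton_iff)
  then show ?thesis
    unfolding pg_line_inter_unital_ab by simp
qed

lemma tangent_line_through_iff:
  "tangent_line (unital_ab q \<alpha> \<beta>) L \<and> proj_pt 0 \<delta> 1 \<in> L \<longleftrightarrow>
     (\<exists>x. 1 + quad_form x = 0 \<and> L = pg_line (beta_trace * x ^ q) 1 \<delta>)"
proof
  assume tangent: "tangent_line (unital_ab q \<alpha> \<beta>) L \<and> proj_pt 0 \<delta> 1 \<in> L"
  then obtain m where L: "L = pg_line m 1 \<delta>"
    using pg_lines_through_y_axis_point_cases[of L \<delta>] pg_line_axis_not_tangent
    unfolding tangent_line_def neg_eq_self by blast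
  let ?pt = "\<lambda>x. proj_pt x (m * x + \<delta>) 1"
  have "inj ?pt"
    by (rule injI) (simp add: proj_pt_affine_eq_iff)
  then have "card {x. incidence_poly m x = 0} = 1"
    using tangent unfolding tangent_line_def L pg_line_inter_unital_ab
    by (simp add: card_image inj_on_subset)
  then obtain x where roots: "{y. incidence_poly m y = 0} = {x}"
    by (auto simp: card_1_singleton_iff)
  then have "m = beta_trace * x ^ q"
    using incidence_poly_roots_eq_singleton_iff by blast
  moreover have "incidence_poly m x = 0"
    using roots by blast
  ultimately have "1 + quad_form x = 0"
    by (simp add: incidence_poly_at_contact)
  with \<open>m = beta_trace * x ^ q\<close> L
  show "\<exists>x. 1 + quad_form x = 0 \<and> L = pg_line (beta_trace * x ^ q) 1 \<delta>"
    by blast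
next
  assume "\<exists>x. 1 + quad_form x = 0 \<and> L = pg_line (beta_trace * x ^ q) 1 \<delta>"
  then obtain x where "1 + quad_form x = 0" and L: "L = pg_line (beta_trace * x ^ q) 1 \<delta>"
    by blast
  then show "tangent_line (unital_ab q \<alpha> \<beta>) L \<and> proj_pt 0 \<delta> 1 \<in> L"
    unfolding tangent_line_def L pg_line_tangent_inter_unital_ab[OF \<open>1 + quad_form x = 0\<close>]
    by (simp add: pg_line_in_pg_lines affine_pt_in_pg_line_iff)
qed

lemma tangent_contact_y:
  assumes "1 + quad_form x = 0"
  shows "beta_trace * x ^ q * x + \<delta> = \<alpha> * x ^ 2 + \<alpha> ^ q * x ^ (2 * q) + \<delta> ^ q"
proof (rule char_two_eqI[OF char_two, where k = "beta_trace * x ^ q * x"])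
  have "beta_trace * x ^ q * x + \<delta> - (\<alpha> * x ^ 2 + \<alpha> ^ q * x ^ (2 * q) + \<delta> ^ q)
          = 2 * (beta_trace * x ^ q * x) - (1 + quad_form x)"
    unfolding quad_form_def delta_power_q power_q_simps(2) by algebra
  then show "beta_trace * x ^ q * x + \<delta> - (\<alpha> * x ^ 2 + \<alpha> ^ q * x ^ (2 * q) + \<delta> ^ q)
          = 2 * (beta_trace * x ^ q * x)"
    using assms by simp
qed

lemma pedal_unital_ab_eq_contact_points:
  "pedal (unital_ab q \<alpha> \<beta>) (proj_pt 0 \<delta> 1) =
     (\<lambda>x. proj_pt x (beta_trace * x ^ q * x + \<delta>) 1) ` {x. 1 + quad_form x = 0}"
proof -
  have "T \<in> pedal (unital_ab q \<alpha> \<beta>) (proj_pt 0 \<delta> 1) \<longleftrightarrow>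
          (\<exists>x. 1 + quad_form x = 0 \<and>
             T \<in> pg_line (beta_trace * x ^ q) 1 \<delta> \<inter> unital_ab q \<alpha> \<beta>)"
    for T
    unfolding pedal_def using tangent_line_through_iff by blast
  also have "\<dots> T \<longleftrightarrow>
      (\<exists>x. 1 + quad_form x = 0 \<and> T = proj_pt x (beta_trace * x ^ q * x + \<delta>) 1)"
    for T
    using pg_line_tangent_inter_unital_ab by blast
  finally show ?thesis
    by blast
qed

lemma pedal_unital_ab:
  "pedal (unital_ab q \<alpha> \<beta>) (proj_pt 0 \<delta> 1) =
     {proj_pt x (\<alpha> * x ^ 2 + \<alpha> ^ q * x ^ (2 * q) + \<delta> ^ q) 1 | x.
        1 + \<alpha> * x ^ 2 + \<alpha> ^ q * x ^ (2 * q) + (\<beta> + \<beta> ^ q) * x ^ (q + 1) = 0}"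
proof -
  have tangency_eq: "1 + \<alpha> * x ^ 2 + \<alpha> ^ q * x ^ (2 * q) + (\<beta> + \<beta> ^ q) * x ^ (q + 1)
      = 1 + quad_form x" for x
    unfolding quad_form_def beta_trace_def by (simp only: add.assoc)
  show ?thesis
    unfolding pedal_unital_ab_eq_contact_points tangency_eq using tangent_contact_y by fastforce
qed

lemma pedal_unital_ab_in_baer_pencil:
  assumes "P \<in> pedal (unital_ab q \<alpha> \<beta>) (proj_pt 0 \<delta> 1)"
  shows "\<exists>B \<in> {proj_pt 0 (s + \<delta> ^ q) 1 | s. s \<in> Fq q} \<union> {proj_pt 0 1 0}.
           \<exists>L \<in> pg_lines. proj_pt 1 0 0 \<in> L \<and> B \<in> L \<and> P \<in> L"
proof -
  obtain x where P: "P = proj_pt x (\<alpha> * x ^ 2 + \<alpha> ^ q * x ^ (2 * q) + \<delta> ^ q) 1"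
    using assms unfolding pedal_unital_ab by blast
  define s where "s = \<alpha> * x ^ 2 + \<alpha> ^ q * x ^ (2 * q)"
  have "s \<in> Fq q"
    unfolding Fq_def s_def power_q_simps(1)
    by (simp add: power_q_add power_mult_distrib power_q_simps(3) power_q_power_q add.commute)
  moreover have "proj_pt 0 (s + \<delta> ^ q) 1 \<in> pg_line 0 1 (- (s + \<delta> ^ q))"
    and "proj_pt 1 0 0 \<in> pg_line 0 1 (- (s + \<delta> ^ q))"
    and "P \<in> pg_line 0 1 (- (s + \<delta> ^ q))"
    unfolding P s_def by (subst proj_pt_in_pg_line_iff; simp add: add.assoc)+
  moreover have "pg_line 0 1 (- (s + \<delta> ^ q)) \<in> pg_lines"
    by (simp add: pg_line_in_pg_lines)
  ultimately show ?thesis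
    by blast
qed

end

theorem lemma3p2:
  fixes \<alpha> \<beta> \<delta> v :: "'a::{field,finite}" and q h :: nat
  assumes hq: "q = 2 ^ h" and q4: "q \<ge> 4"
    and card: "card (UNIV :: 'a set) = q ^ 2"
    and delta_q: "\<delta> ^ q = 1 + \<delta>" and delta_sq: "\<delta> ^ 2 = v + \<delta>"
    and v_Fq: "v \<in> Fq q" and v_ne1: "v \<noteq> 1" and v_tr: "abs_trace h v = 1"
    and alpha_nz: "\<alpha> \<noteq> 0" and beta_nFq: "\<beta> \<notin> Fq q"
    and tr0: "abs_trace h (\<alpha> ^ (q + 1) / (\<beta> ^ q + \<beta>) ^ 2) = 0"
  shows "pedal (unital_ab q \<alpha> \<beta>) (proj_pt 0 \<delta> 1) =
           {proj_pt x (\<alpha> * x ^ 2 + \<alpha> ^ q * x ^ (2 * q) + \<delta> ^ q) 1 | x.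
              1 + \<alpha> * x ^ 2 + \<alpha> ^ q * x ^ (2 * q) + (\<beta> + \<beta> ^ q) * x ^ (q + 1) = 0}
       \<and> (\<forall>P \<in> pedal (unital_ab q \<alpha> \<beta>) (proj_pt 0 \<delta> 1).
            \<exists>B \<in> {proj_pt 0 (s + \<delta> ^ q) 1 | s. s \<in> Fq q} \<union> {proj_pt 0 1 0}.
              \<exists>L \<in> pg_lines. proj_pt 1 0 0 \<in> L \<and> B \<in> L \<and> P \<in> L)"
proof -
  have "h \<noteq> 0"
    using hq q4 by (cases h) auto
  then have "even (card (UNIV :: 'a set))"
    using card hq by simp
  then have char_two: "(2 :: 'a) = 0"
    by (rule finite_field_char_two)
  have power_q_add: "(x + y) ^ q = x ^ q + y ^ q" for x y :: 'a
    using char_two_power_two_power_add[OF char_two] hq by simp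
  have power_q_power_q: "(x ^ q) ^ q = x" for x :: 'a
    using finite_field_power_card[of x] card by (simp add: power_mult[symmetric] power2_eq_square)
  have "\<beta> ^ q \<noteq> \<beta>"
    using beta_nFq by (simp add: Fq_def)
  note anisotropic = anisotropic_if_abs_trace_zero[OF char_two power_q_add power_q_power_q hq this tr0]
  interpret char_two_unital q \<alpha> \<beta> \<delta>
  proof unfold_locales
    show "0 < q"
      using q4 by simp
  qed (fact char_two power_q_add power_q_power_q delta_q anisotropic)+
  show ?thesis
    using pedal_unital_ab pedal_unital_ab_in_baer_pencil by blast
qed

end
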